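(* If $G=(V,E)$ is not observable and $|V|\ge 2$, then for any player algorithm (for the online learning problem with feedback graph $G$) there exists a sequence of loss functions $\ell_1,\ell_2,\dots:V\to[0,1]$ such that the player's expected regret after $T$ rounds is at least $\tfrac14 T$.
   Context: Let $G=(V,E)$ be a directed graph (self-loops allowed), $N^{\mathrm{in}}(i)=\{j:(j,i)\in E\}$, $N^{\mathrm{out}}(i)=\{j:(i,j)\in E\}$. $G$ is observable if $N^{\mathrm{in}}(i)\neq\emptyset$ for every $i\in V$. Online learning with feedback graph $G$: the environment fixes in advance losses $\ell_t:V\to[0,1]$; on round $t$ the player (possibly randomly) chooses $I_t\in V$ based on past observations, incurs $\ell_t(I_t)$, and observes only $\{(j,\ell_t(j)):j\in N^{\mathrm{out}}(I_t)\}$. The expected regret after $T$ rounds is $\mathbb{E}[\sum_{t=1}^T\ell_t(I_t)]-\min_{i\in V}\sum_{t=1}^T\ell_t(i)$. *)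

theory Defs
  imports "HOL-Probability.Probability"
begin

text \<open>Vertex set V is the finite type 'v (V = UNIV); the edge set is E :: ('v \<times> 'v) set.
  Rounds are numbered 1, 2, ...; the loss sequence is l :: nat \<Rightarrow> 'v \<Rightarrow> real
  (l t is the loss function of round t).\<close>

definition in_nbrs :: "('v \<times> 'v) set \<Rightarrow> 'v \<Rightarrow> 'v set" where
  "in_nbrs E i = {j. (j, i) \<in> E}"

definition out_nbrs :: "('v \<times> 'v) set \<Rightarrow> 'v \<Rightarrow> 'v set" where
  "out_nbrs E i = {j. (i, j) \<in> E}"

definition observable :: "('v \<times> 'v) set \<Rightarrow> bool" where
  "observable E \<longleftrightarrow> (\<forall>i. in_nbrs E i \<noteq> {})"

text \<open>What the player sees in a round: its own action and the partial loss function
  revealing l t j exactly for j in the out-neighbourhood of the chosen action.\<close>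
type_synonym 'v observation = "'v \<times> ('v \<Rightarrow> real option)"

definition observe :: "('v \<times> 'v) set \<Rightarrow> ('v \<Rightarrow> real) \<Rightarrow> 'v \<Rightarrow> 'v observation" where
  "observe E lt i = (i, (\<lambda>j. if j \<in> out_nbrs E i then Some (lt j) else None))"

type_synonym 'v player = "nat \<Rightarrow> 'v observation list \<Rightarrow> 'v pmf"

fun history :: "('v \<times> 'v) set \<Rightarrow> 'v player \<Rightarrow> (nat \<Rightarrow> 'v \<Rightarrow> real) \<Rightarrow> nat
                 \<Rightarrow> 'v observation list pmf" where
  "history E P l 0 = return_pmf []"
| "history E P l (Suc t) =
     bind_pmf (history E P l t)
       (\<lambda>h. map_pmf (\<lambda>i. h @ [observe E (l (Suc t)) i]) (P (Suc t) h))"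

definition expected_regret :: "('v::finite \<times> 'v) set \<Rightarrow> 'v player \<Rightarrow> (nat \<Rightarrow> 'v \<Rightarrow> real)
                                  \<Rightarrow> nat \<Rightarrow> real" where
  "expected_regret E P l T =
     measure_pmf.expectation (history E P l T)
        (\<lambda>h. \<Sum>k<T. l (Suc k) (fst (h ! k)))
     - Min (range (\<lambda>i. \<Sum>t=1..T. l t i))"

end

theory Submission
  imports Defs
begin

text \<open>Let \<open>a\<close> be a vertex without in-neighbours: no action ever reveals its loss. Give every
  other vertex loss 1/2 and \<open>a\<close> loss either 0 or 1. The player cannot tell the two environments
  apart, so it visits \<open>a\<close> the same expected number \<open>p\<close> of times in both. Against loss 0 it
  misses \<open>(T - p)/2\<close> compared with \<open>a\<close>, against loss 1 it loses \<open>p/2\<close> compared with any other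
  vertex; one of the two is at least \<open>T/4\<close>.\<close>

lemma history_cong_observe:
  assumes "\<And>t i. observe E (l t) i = observe E (l' t) i"
  shows "history E P l T = history E P l' T"
  by (induction T) (simp_all add: assms)

lemma expected_regret_ge:
  fixes E :: "('v::finite \<times> 'v) set"
  shows "expected_regret E P l T \<ge>
           measure_pmf.expectation (history E P l T) (\<lambda>h. \<Sum>k<T. l (Suc k) (fst (h ! k)))
           - (\<Sum>t=1..T. l t i)"
proof -
  have "Min (range (\<lambda>i. \<Sum>t=1..T. l t i)) \<le> (\<Sum>t=1..T. l t i)"
    by (rule Min_le) auto
  then show ?thesis
    unfolding expected_regret_def by linarith
qed

definition hidden_arm_loss :: "'v \<Rightarrow> real \<Rightarrow> nat \<Rightarrow> 'v \<Rightarrow> real" where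
  "hidden_arm_loss a c t i = (if i = a then c else 1/2)"

definition visits :: "'v \<Rightarrow> nat \<Rightarrow> 'v observation list \<Rightarrow> real" where
  "visits a T h = (\<Sum>k<T. if fst (h ! k) = a then 1 else 0)"

lemma hidden_arm_loss_bounds:
  assumes "0 \<le> c" "c \<le> 1"
  shows "0 \<le> hidden_arm_loss a c t i" and "hidden_arm_loss a c t i \<le> 1"
  using assms unfolding hidden_arm_loss_def by auto

lemma visits_bounds: "0 \<le> visits a T h \<and> visits a T h \<le> real T"
proof -
  have "visits a T h \<le> (\<Sum>k<T. 1)"
    unfolding visits_def by (intro sum_mono) auto
  moreover have "0 \<le> visits a T h"
    unfolding visits_def by (intro sum_nonneg) auto
  ultimately show ?thesis by simp
qed

lemma history_hidden_arm_loss: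
  assumes "in_nbrs E a = {}"
  shows "history E P (hidden_arm_loss a c) T = history E P (hidden_arm_loss a c') T"
proof (rule history_cong_observe)
  fix t i
  have "a \<notin> out_nbrs E i"
    using assms unfolding in_nbrs_def out_nbrs_def by auto
  then show "observe E (hidden_arm_loss a c t) i = observe E (hidden_arm_loss a c' t) i"
    unfolding observe_def hidden_arm_loss_def by (auto intro!: ext)
qed

lemma cumulative_hidden_arm_loss:
  "(\<Sum>k<T. hidden_arm_loss a c (Suc k) (fst (h ! k))) = real T / 2 + (c - 1/2) * visits a T h"
proof -
  have "(\<Sum>k<T. hidden_arm_loss a c (Suc k) (fst (h ! k)))
      = (\<Sum>k<T. 1/2 + (c - 1/2) * (if fst (h ! k) = a then 1 else 0))"
    unfolding hidden_arm_loss_def by (intro sum.cong) auto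
  also have "\<dots> = real T / 2 + (c - 1/2) * visits a T h"
    unfolding visits_def by (simp add: sum.distrib sum_distrib_left)
  finally show ?thesis .
qed

lemma expected_cumulative_hidden_arm_loss:
  "measure_pmf.expectation H (\<lambda>h. \<Sum>k<T. hidden_arm_loss a c (Suc k) (fst (h ! k)))
     = real T / 2 + (c - 1/2) * measure_pmf.expectation H (visits a T)"
proof -
  have "integrable (measure_pmf H) (visits a T)"
    by (rule measure_pmf.integrable_const_bound[where B = "real T"]) (use visits_bounds[of a T] in auto)
  then show ?thesis
    by (simp add: cumulative_hidden_arm_loss)
qed

lemma expected_regret_hidden_arm_loss:
  assumes "in_nbrs E a = {}"
  shows "expected_regret E P (hidden_arm_loss a c) T \<ge>
           real T / 2 + (c - 1/2) * measure_pmf.expectation (history E P (hidden_arm_loss a 0) T) (visits a T)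
           - real T * (if i = a then c else 1/2)"
proof -
  have "(\<Sum>t=1..T. hidden_arm_loss a c t i) = real T * (if i = a then c else 1/2)"
    by (simp add: hidden_arm_loss_def)
  then show ?thesis
    using expected_regret_ge[of E P "hidden_arm_loss a c" T i]
    by (simp add: history_hidden_arm_loss[OF assms, of P c T 0] expected_cumulative_hidden_arm_loss)
qed

theorem theorem6:
  fixes E :: "('v::finite \<times> 'v) set"
  assumes "\<not> observable E"
    and "CARD('v) \<ge> 2"
  shows "\<forall>(P :: 'v player) (T :: nat). \<exists>l :: nat \<Rightarrow> 'v \<Rightarrow> real.
           (\<forall>t i. 0 \<le> l t i \<and> l t i \<le> 1) \<and>
           expected_regret E P l T \<ge> real T / 4"
proof (intro allI)
  fix P :: "'v player" and T :: nat
  obtain a where a: "in_nbrs E a = {}"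
    using assms(1) unfolding observable_def by auto
  have "UNIV \<noteq> {a}"
  proof
    assume "UNIV = {a}"
    then have "CARD('v) = 1" by (auto simp: card_1_singleton_iff)
    with assms(2) show False by simp
  qed
  then obtain b :: 'v where "b \<noteq> a" by blast
  define p where "p = measure_pmf.expectation (history E P (hidden_arm_loss a 0) T) (visits a T)"
  have "expected_regret E P (hidden_arm_loss a 0) T \<ge> real T / 2 - p / 2"
    using expected_regret_hidden_arm_loss[OF a, where P = P and T = T and c = 0 and i = a] unfolding p_def
    by simp
  moreover have "expected_regret E P (hidden_arm_loss a 1) T \<ge> p / 2"
    using expected_regret_hidden_arm_loss[OF a, where P = P and T = T and c = 1 and i = b] \<open>b \<noteq> a\<close> unfolding p_def
    by simp
  ultimately have "expected_regret E P (hidden_arm_loss a 0) T \<ge> real T / 4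
                  \<or> expected_regret E P (hidden_arm_loss a 1) T \<ge> real T / 4"
    by linarith
  then obtain c :: real where c: "0 \<le> c" "c \<le> 1"
    and regret: "expected_regret E P (hidden_arm_loss a c) T \<ge> real T / 4"
    by (metis order.refl zero_le_one)
  show "\<exists>l. (\<forall>t i. 0 \<le> l t i \<and> l t i \<le> 1) \<and> expected_regret E P l T \<ge> real T / 4"
  proof (intro exI conjI allI)
    show "0 \<le> hidden_arm_loss a c t i" "hidden_arm_loss a c t i \<le> 1" for t i
      using c by (fact hidden_arm_loss_bounds)+
  qed (fact regret)
qed

end
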